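(* Let $\beta>0$. Then there is no $\lambda\in\mathbb{C}$ with $\operatorname{Re}\lambda>-1$ and $\lambda\notin\{0,1\}$ for which there exists $0\ne\phi\in C^\infty[-1,1]$ solving \[ \Big(\lambda^2+\lambda-\frac{2\lambda(1+\beta)}{1+\beta+y(1-\beta)}\Big)\phi+\Big(2\lambda y+2y-\frac{2(1+\beta)y}{1+\beta+y(1-\beta)}-\frac{2(1-\beta)}{1+\beta+y(1-\beta)}\Big)\phi'+(y^2-1)\phi''=0. \] As a result, $U_{1,\beta,\kappa}$ is mode-stable for all $\beta>0$, $\kappa\in\mathbb{R}$.
   Context: $U_{1,\beta,\kappa}(s,y)=s-\log\big((1+y)+\beta(1-y)\big)+\log(1+\beta)+\kappa$ is a generalized self-similar solution of $\partial_{tt}u-\partial_{xx}u=(\partial_tu)^2-(\partial_xu)^2$ in self-similar variables $s=-\ln(T-t)$, $y=\frac{x-x_0}{T-t}$. The eigenvalues of its linearised operator $\mathbf{L}^2_{1,\beta}$ are the $\lambda\in\mathbb{C}$ for which the displayed ODE has a nonzero $C^\infty[-1,1]$ solution; mode-stable means every such eigenvalue has negative real part or equals $0$ or $1$. *)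

theory Defs
  imports "HOL-Analysis.Analysis"
begin

text \<open>Smooth functions on the closed interval [-1,1]: there is a chain of functions
  D 0 = phi, D 1, D 2, ... with D (Suc k) the derivative of D k (taken within [-1,1],
  i.e. one-sided at the endpoints) at every point of [-1,1].\<close>
definition smooth_chain_cl :: "(nat \<Rightarrow> real \<Rightarrow> complex) \<Rightarrow> bool" where
  "smooth_chain_cl D \<longleftrightarrow>
     (\<forall>k. \<forall>y\<in>{-1..1}. (D k has_vector_derivative D (Suc k) y) (at y within {-1..1}))"

definition eig_ode :: "real \<Rightarrow> complex \<Rightarrow> (real \<Rightarrow> complex) \<Rightarrow> (real \<Rightarrow> complex)
    \<Rightarrow> (real \<Rightarrow> complex) \<Rightarrow> real \<Rightarrow> bool" where
  "eig_ode \<beta> lam ph ph' ph'' y \<longleftrightarrow>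
     (let d = 1 + \<beta> + y * (1 - \<beta>) in
       (lam^2 + lam - 2 * lam * of_real (1 + \<beta>) / of_real d) * ph y
     + (2 * lam * of_real y + of_real (2 * y) - of_real (2 * (1 + \<beta>) * y / d)
          - of_real (2 * (1 - \<beta>) / d)) * ph' y
     + of_real (y^2 - 1) * ph'' y = 0)"

definition is_eigenvalue_L2 :: "real \<Rightarrow> complex \<Rightarrow> bool" where
  "is_eigenvalue_L2 \<beta> lam \<longleftrightarrow>
     (\<exists>D. smooth_chain_cl D \<and> (\<exists>y\<in>{-1..1}. D 0 y \<noteq> 0) \<and>
          (\<forall>y\<in>{-1..1}. eig_ode \<beta> lam (D 0) (D 1) (D 2) y))"

text \<open>Mode stability of U_{1,beta,kappa}; the linearised operator does not depend on kappa.\<close>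
definition mode_stable :: "real \<Rightarrow> real \<Rightarrow> bool" where
  "mode_stable \<beta> \<kappa> \<longleftrightarrow>
     (\<forall>lam. is_eigenvalue_L2 \<beta> lam \<longrightarrow> Re lam < 0 \<or> lam = 0 \<or> lam = 1)"

end

theory Submission
  imports Defs
begin

text \<open>Since \<open>d(y) = 1 + \<beta> + (1 - \<beta>) y\<close> is positive on \<open>[-1, 1]\<close>, we may pass from \<open>\<phi>\<close> to
  \<open>\<psi> = d \<phi>\<close>, which solves the \<open>\<beta>\<close>-independent equation
  \<open>(y\<^sup>2 - 1) \<psi>'' + 2 \<lambda> y \<psi>' + \<lambda> (\<lambda> - 1) \<psi> = 0\<close>; its \<open>k\<close>-th derivative solves the same
  equation with \<open>\<lambda> + k\<close>. For \<open>Re \<mu> > 1\<close> this equation factors into the first-order equations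
  \<open>(1 - y) \<eta>' = \<mu> \<eta>\<close> and \<open>(1 + y) \<psi>' = (1 - \<mu>) \<psi>\<close>, singular at \<open>y = 1\<close> and \<open>y = -1\<close>
  respectively; along each, \<open>|\<eta>|\<^sup>2\<close> resp. \<open>|\<psi>|\<^sup>2\<close> is monotone towards the singular endpoint,
  where the solution vanishes, so both are zero. Applied to \<open>\<psi>''\<close> (where \<open>Re (\<lambda> + 2) > 1\<close>)
  this gives \<open>\<psi>'' = 0\<close>, and the equations for \<open>\<psi>'\<close> and \<open>\<psi>\<close> then force \<open>\<psi>' = \<psi> = 0\<close>
  because \<open>\<lambda> \<notin> {-1, 0, 1}\<close>.\<close>

definition reduced_eig_ode :: "complex \<Rightarrow> (real \<Rightarrow> complex) \<Rightarrow> (real \<Rightarrow> complex)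
    \<Rightarrow> (real \<Rightarrow> complex) \<Rightarrow> real \<Rightarrow> bool" where
  "reduced_eig_ode \<mu> f f' f'' y \<longleftrightarrow>
     of_real (y^2 - 1) * f'' y + 2 * \<mu> * of_real y * f' y + \<mu> * (\<mu> - 1) * f y = 0"

text \<open>The derivatives of \<open>y \<mapsto> (p + q y) D 0 y\<close> by the Leibniz rule; at \<open>k = 0\<close> the
  truncated \<open>k - 1\<close> is harmless because its coefficient vanishes.\<close>
definition affine_mult_chain :: "real \<Rightarrow> real \<Rightarrow> (nat \<Rightarrow> real \<Rightarrow> complex) \<Rightarrow> nat \<Rightarrow> real \<Rightarrow> complex" where
  "affine_mult_chain p q D k y = of_real (real k * q) * D (k - 1) y + of_real (p + q * y) * D k y"

lemma smooth_chain_cl_affine_mult_chain: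
  assumes "smooth_chain_cl D"
  shows "smooth_chain_cl (affine_mult_chain p q D)"
  unfolding smooth_chain_cl_def
proof (intro allI ballI)
  fix k and y :: real
  assume "y \<in> {-1..1}"
  then have D: "\<And>j. (D j has_vector_derivative D (Suc j) y) (at y within {-1..1})"
    using assms unfolding smooth_chain_cl_def by blast
  show "(affine_mult_chain p q D k has_vector_derivative affine_mult_chain p q D (Suc k) y)
      (at y within {-1..1})"
  proof (cases k)
    case 0
    show ?thesis unfolding affine_mult_chain_def 0
      by (rule derivative_eq_intros D refl | simp)+
  next
    case (Suc m)
    show ?thesis unfolding affine_mult_chain_def Suc
      by (rule derivative_eq_intros D refl | simp)+ (simp add: algebra_simps)
  qed
qed

lemma eig_ode_iff_reduced_eig_ode:
  fixes \<beta> y :: real and D :: "nat \<Rightarrow> real \<Rightarrow> complex"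
  defines "Q \<equiv> affine_mult_chain (1 + \<beta>) (1 - \<beta>) D"
  assumes "1 + \<beta> + (1 - \<beta>) * y \<noteq> 0"
  shows "eig_ode \<beta> lam (D 0) (D 1) (D 2) y \<longleftrightarrow> reduced_eig_ode lam (Q 0) (Q 1) (Q 2) y"
proof -
  define d where "d = 1 + \<beta> + y * (1 - \<beta>)"
  have "d \<noteq> 0" using assms(2) by (simp add: d_def algebra_simps)
  then have d: "(of_real d :: complex) \<noteq> 0" by simp
  have "of_real d * ((lam^2 + lam - 2 * lam * of_real (1 + \<beta>) / of_real d) * D 0 y
     + (2 * lam * of_real y + of_real (2 * y) - of_real (2 * (1 + \<beta>) * y / d)
          - of_real (2 * (1 - \<beta>) / d)) * D 1 y
     + of_real (y^2 - 1) * D 2 y) =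
    of_real d * (lam^2 + lam) * D 0 y - 2 * lam * of_real (1 + \<beta>) * D 0 y
     + (of_real d * (2 * lam * of_real y + of_real (2 * y)) - of_real (2 * (1 + \<beta>) * y)
          - of_real (2 * (1 - \<beta>))) * D 1 y
     + of_real d * of_real (y^2 - 1) * D 2 y"
    using d by (simp add: algebra_simps diff_divide_distrib add_divide_distrib)
  also have "\<dots> = of_real (y^2 - 1) * Q 2 y + 2 * lam * of_real y * Q 1 y + lam * (lam - 1) * Q 0 y"
    by (simp add: Q_def affine_mult_chain_def d_def algebra_simps power2_eq_square)
  finally show ?thesis
    unfolding eig_ode_def reduced_eig_ode_def Let_def d_def[symmetric] using d by auto
qed

lemma has_real_derivative_cmod_power2:
  fixes f :: "real \<Rightarrow> complex"
  assumes "(f has_vector_derivative f') (at x)"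
  shows "((\<lambda>x. (cmod (f x))^2) has_real_derivative 2 * Re (cnj (f x) * f')) (at x)"
proof -
  have "(\<lambda>x. (cmod (f x))^2) = (\<lambda>x. Re (cnj (f x) * f x))"
    by (simp add: cmod_power2 flip: power2_eq_square)
  moreover have "((\<lambda>x. Re (cnj (f x) * f x)) has_real_derivative
      Re (cnj f' * f x + cnj (f x) * f')) (at x)"
    by (rule derivative_eq_intros assms refl | simp)+
  ultimately show ?thesis
    by (simp add: algebra_simps)
qed

lemma Euler_ode_right_trivial:
  fixes f f' :: "real \<Rightarrow> complex"
  assumes deriv: "\<And>t. t \<in> {a..b} \<Longrightarrow> (f has_vector_derivative f' t) (at t within {a..b})"
    and ode: "\<And>t. t \<in> {a..b} \<Longrightarrow> of_real (b - t) * f' t = c * f t"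
    and c: "0 < Re c" and x: "x \<in> {a..b}"
  shows "f x = 0"
proof -
  have "c \<noteq> 0" using c by auto
  then have fb: "f b = 0" using ode[of b] x by simp
  have "(cmod (f x))^2 \<le> (cmod (f b))^2"
  proof (rule DERIV_nonneg_imp_increasing_open[where f = "\<lambda>t. (cmod (f t))^2"])
    show "x \<le> b" using x by simp
    have "continuous_on {a..b} f"
      by (rule continuous_on_vector_derivative) (rule deriv)
    then have "continuous_on {x..b} f"
      by (rule continuous_on_subset) (use x in auto)
    then show "continuous_on {x..b} (\<lambda>t. (cmod (f t))^2)"
      by (intro continuous_intros)
  next
    fix t assume t: "x < t" "t < b"
    then have "at t within {a..b} = at t"
      using x by (intro at_within_interior) auto
    then have "(f has_vector_derivative f' t) (at t)"
      using deriv[of t] t x by simp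
    then have "((\<lambda>t. (cmod (f t))^2) has_real_derivative 2 * Re (cnj (f t) * f' t)) (at t)"
      by (rule has_real_derivative_cmod_power2)
    moreover have "0 \<le> Re (cnj (f t) * f' t)"
    proof -
      have "of_real (b - t) * (cnj (f t) * f' t) = cnj (f t) * (c * f t)"
        using ode[of t] t x by (simp add: mult.left_commute)
      also have "\<dots> = c * (f t * cnj (f t))"
        by (simp add: ac_simps)
      also have "\<dots> = c * of_real ((cmod (f t))^2)"
        by (simp only: complex_norm_square)
      finally have "Re (of_real (b - t) * (cnj (f t) * f' t)) = Re (c * of_real ((cmod (f t))^2))"
        by (rule arg_cong)
      then have "(b - t) * Re (cnj (f t) * f' t) = Re c * (cmod (f t))^2"
        by simp
      moreover have "0 \<le> Re c * (cmod (f t))^2"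
        using c by simp
      ultimately show ?thesis
        using t by (metis diff_gt_0_iff_gt zero_le_mult_iff linorder_not_le)
    qed
    ultimately show "\<exists>y. ((\<lambda>t. (cmod (f t))^2) has_real_derivative y) (at t) \<and> 0 \<le> y"
      by auto
  qed
  with fb show "f x = 0" by simp
qed

lemma Euler_ode_left_trivial:
  fixes f f' :: "real \<Rightarrow> complex"
  assumes deriv: "\<And>t. t \<in> {a..b} \<Longrightarrow> (f has_vector_derivative f' t) (at t within {a..b})"
    and ode: "\<And>t. t \<in> {a..b} \<Longrightarrow> of_real (t - a) * f' t = c * f t"
    and c: "Re c < 0" and x: "x \<in> {a..b}"
  shows "f x = 0"
proof -
  have "f (- (- x)) = 0"
  proof (rule Euler_ode_right_trivial[where f = "\<lambda>t. f (- t)" and f' = "\<lambda>t. - f' (- t)"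
        and a = "- b" and b = "- a" and c = "- c"])
    fix t :: real
    assume "t \<in> {-b..-a}"
    then have t: "- t \<in> {a..b}" by auto
    have "(uminus has_vector_derivative -1) (at t within {-b..-a})"
      by (rule derivative_eq_intros refl)+
    moreover have "(f has_vector_derivative f' (- t)) (at (- t) within uminus ` {-b..-a})"
      using deriv[OF t] by simp
    ultimately show "((\<lambda>t. f (- t)) has_vector_derivative - f' (- t)) (at t within {-b..-a})"
      using vector_diff_chain_within[of uminus "-1" t "{-b..-a}" f "f' (- t)"] by (simp add: o_def)
    show "of_real (- a - t) * - f' (- t) = - c * f (- t)"
      using ode[OF t] by (simp add: algebra_simps)
  qed (use c x in auto)
  then show ?thesis by simp
qed

lemma has_vector_derivative_eq_0_if_vanishing:
  fixes f :: "real \<Rightarrow> 'a::real_normed_vector"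
  assumes "a < b" and x: "x \<in> {a..b}"
    and "(f has_vector_derivative f') (at x within {a..b})"
    and vanish: "\<And>t. t \<in> {a..b} \<Longrightarrow> f t = 0"
  shows "f' = 0"
proof -
  have "((\<lambda>_. 0) has_vector_derivative f') (at x within {a..b})"
    by (rule has_vector_derivative_transform[OF x _ assms(3)]) (simp add: vanish)
  then show ?thesis
    using vector_derivative_unique_within_closed_interval[of a b x "\<lambda>_. 0" f' 0] assms(1,2)
    by auto
qed

lemma smooth_chain_cl_vanishing_Suc:
  assumes "smooth_chain_cl Q" and "\<forall>y\<in>{-1..1}. Q k y = 0" and "y \<in> {-1..1}"
  shows "Q (Suc k) y = 0"
  using has_vector_derivative_eq_0_if_vanishing[of "-1" 1 y "Q k" "Q (Suc k) y"] assms
  unfolding smooth_chain_cl_def by auto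

lemma reduced_eig_ode_Suc:
  assumes Q: "smooth_chain_cl Q"
    and ode: "\<forall>y\<in>{-1..1}. reduced_eig_ode \<mu> (Q k) (Q (k + 1)) (Q (k + 2)) y"
    and y: "y \<in> {-1..1}"
  shows "reduced_eig_ode (\<mu> + 1) (Q (k + 1)) (Q (k + 2)) (Q (k + 3)) y"
proof -
  define L where "L t = of_real (t^2 - 1) * Q (k + 2) t + 2 * \<mu> * of_real t * Q (k + 1) t
    + \<mu> * (\<mu> - 1) * Q k t" for t
  have dL: "(L has_vector_derivative
      of_real (y^2 - 1) * Q (k + 3) y + 2 * (\<mu> + 1) * of_real y * Q (k + 2) y
      + (\<mu> + 1) * \<mu> * Q (k + 1) y) (at y within {-1..1})"
  proof -
    have dQ: "\<And>j. (Q j has_vector_derivative Q (Suc j) y) (at y within {-1..1})"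
      using Q y unfolding smooth_chain_cl_def by blast
    show ?thesis
      unfolding L_def
      by (rule derivative_eq_intros dQ refl | simp)+ (simp add: algebra_simps eval_nat_numeral)
  qed
  have L0: "\<And>t. t \<in> {-1..1} \<Longrightarrow> L t = 0"
    using ode unfolding L_def reduced_eig_ode_def by blast
  have "of_real (y^2 - 1) * Q (k + 3) y + 2 * (\<mu> + 1) * of_real y * Q (k + 2) y
      + (\<mu> + 1) * \<mu> * Q (k + 1) y = 0"
    using has_vector_derivative_eq_0_if_vanishing[OF _ y dL L0] by simp
  then show ?thesis
    unfolding reduced_eig_ode_def by simp
qed

lemma reduced_eig_ode_trivial:
  assumes Q: "smooth_chain_cl Q"
    and ode: "\<forall>y\<in>{-1..1}. reduced_eig_ode \<mu> (Q k) (Q (k + 1)) (Q (k + 2)) y"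
    and \<mu>: "1 < Re \<mu>" and y: "y \<in> {-1..1}"
  shows "Q k y = 0"
proof -
  have dQ: "\<And>j t. t \<in> {-1..1} \<Longrightarrow> (Q j has_vector_derivative Q (Suc j) t) (at t within {-1..1})"
    using Q unfolding smooth_chain_cl_def by blast
  text \<open>\<open>(1 - t) \<eta>' t - \<mu> \<eta> t\<close> is minus the left-hand side of the reduced equation.\<close>
  define \<eta> where "\<eta> t = of_real (1 + t) * Q (k + 1) t + (\<mu> - 1) * Q k t" for t
  define \<eta>' where "\<eta>' t = of_real (1 + t) * Q (k + 2) t + \<mu> * Q (k + 1) t" for t
  have "\<eta> t = 0" if t: "t \<in> {-1..1}" for t
  proof (rule Euler_ode_right_trivial[OF _ _ _ t])
    fix s :: real
    assume s: "s \<in> {-1..1}"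
    show "(\<eta> has_vector_derivative \<eta>' s) (at s within {-1..1})"
      unfolding \<eta>_def \<eta>'_def
      by (rule derivative_eq_intros dQ[OF s] refl | simp)+ (simp add: algebra_simps eval_nat_numeral)
    show "of_real (1 - s) * \<eta>' s = \<mu> * \<eta> s"
      using ode s unfolding reduced_eig_ode_def \<eta>_def \<eta>'_def
      by (simp add: algebra_simps power2_eq_square)
  qed (use \<mu> in simp)
  then have "of_real (t - -1) * Q (k + 1) t = (1 - \<mu>) * Q k t" if "t \<in> {-1..1}" for t
    using that unfolding \<eta>_def by (simp add: algebra_simps add_eq_0_iff)
  then show ?thesis
    by (rule Euler_ode_left_trivial[rotated, OF _ _ y]) (use \<mu> dQ in auto)
qed

lemma reduced_eig_ode_descend:
  assumes Q: "smooth_chain_cl Q"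
    and ode: "\<forall>y\<in>{-1..1}. reduced_eig_ode \<mu> (Q k) (Q (k + 1)) (Q (k + 2)) y"
    and \<mu>: "\<mu> \<notin> {0, 1}" and vanish: "\<forall>y\<in>{-1..1}. Q (k + 1) y = 0" and y: "y \<in> {-1..1}"
  shows "Q k y = 0"
proof -
  have "Q (k + 2) y = 0"
    using smooth_chain_cl_vanishing_Suc[OF Q vanish y] by simp
  moreover have "reduced_eig_ode \<mu> (Q k) (Q (k + 1)) (Q (k + 2)) y"
    using ode y by blast
  ultimately have "\<mu> * (\<mu> - 1) * Q k y = 0"
    using vanish y unfolding reduced_eig_ode_def by simp
  then show ?thesis
    using \<mu> by simp
qed

lemma reduced_eig_ode_only_trivial:
  assumes Q: "smooth_chain_cl Q"
    and ode: "\<forall>y\<in>{-1..1}. reduced_eig_ode lam (Q 0) (Q 1) (Q 2) y"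
    and lam: "-1 < Re lam" "lam \<notin> {0, 1}" and y: "y \<in> {-1..1}"
  shows "Q 0 y = 0"
proof -
  have ode1: "\<forall>y\<in>{-1..1}. reduced_eig_ode (lam + 1) (Q 1) (Q 2) (Q 3) y"
    using reduced_eig_ode_Suc[OF Q, of lam 0] ode by (simp add: eval_nat_numeral)
  have ode2: "\<forall>y\<in>{-1..1}. reduced_eig_ode (lam + 2) (Q 2) (Q 3) (Q 4) y"
    using reduced_eig_ode_Suc[OF Q, of "lam + 1" 1] ode1 by (simp add: add.assoc eval_nat_numeral)
  have "lam \<noteq> -1"
    using lam(1) by auto
  then have lam1: "lam + 1 \<notin> {0, 1}"
    using lam(2) by (auto simp: add_eq_0_iff) (metis minus_minus)
  have "\<forall>y\<in>{-1..1}. Q 2 y = 0"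
    using reduced_eig_ode_trivial[OF Q, of "lam + 2" 2] ode2 lam(1) by (simp add: eval_nat_numeral)
  then have "\<forall>y\<in>{-1..1}. Q 1 y = 0"
    using reduced_eig_ode_descend[OF Q _ lam1, of 1] ode1 by (simp add: eval_nat_numeral)
  then show ?thesis
    using reduced_eig_ode_descend[OF Q _ lam(2), of 0] ode y by (simp add: eval_nat_numeral)
qed

lemma not_is_eigenvalue_L2:
  assumes \<beta>: "0 < \<beta>" and lam: "-1 < Re lam" "lam \<notin> {0, 1}"
  shows "\<not> is_eigenvalue_L2 \<beta> lam"
proof
  assume "is_eigenvalue_L2 \<beta> lam"
  then obtain D where D: "smooth_chain_cl D" and nonzero: "\<exists>y\<in>{-1..1}. D 0 y \<noteq> 0"
    and ode: "\<forall>y\<in>{-1..1}. eig_ode \<beta> lam (D 0) (D 1) (D 2) y"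
    unfolding is_eigenvalue_L2_def by blast
  define Q where "Q = affine_mult_chain (1 + \<beta>) (1 - \<beta>) D"
  have pos: "0 < 1 + \<beta> + (1 - \<beta>) * y" if "y \<in> {-1..1}" for y
  proof -
    have "1 + \<beta> + (1 - \<beta>) * y = (1 + y) + \<beta> * (1 - y)"
      by (simp add: algebra_simps)
    moreover have "0 \<le> \<beta> * (1 - y)"
      using that \<beta> by simp
    moreover have "0 < 1 + y \<or> y = -1"
      using that by auto
    ultimately show ?thesis
      using \<beta> by auto
  qed
  have "\<forall>y\<in>{-1..1}. reduced_eig_ode lam (Q 0) (Q 1) (Q 2) y"
    using ode pos eig_ode_iff_reduced_eig_ode[of \<beta> _ lam D] unfolding Q_def by fastforce
  then have Q0: "Q 0 y = 0" if "y \<in> {-1..1}" for y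
    using reduced_eig_ode_only_trivial[OF smooth_chain_cl_affine_mult_chain[OF D] _ lam that]
    unfolding Q_def by blast
  obtain y where y: "y \<in> {-1..1}" "D 0 y \<noteq> 0"
    using nonzero by blast
  have "of_real (1 + \<beta> + (1 - \<beta>) * y) * D 0 y = 0"
    using Q0[OF y(1)] unfolding Q_def affine_mult_chain_def by simp
  then show False
    using pos[OF y(1)] y(2) by (metis less_irrefl mult_eq_0_iff of_real_eq_0_iff)
qed

theorem proposition4p2:
  fixes \<beta> :: real
  assumes "\<beta> > 0"
  shows "\<not> (\<exists>lam. Re lam > -1 \<and> lam \<notin> {0, 1} \<and> is_eigenvalue_L2 \<beta> lam)
         \<and> (\<forall>\<kappa>. mode_stable \<beta> \<kappa>)"
proof -
  have "Re lam < 0 \<or> lam = 0 \<or> lam = 1" if "is_eigenvalue_L2 \<beta> lam" for lam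
    using not_is_eigenvalue_L2[OF assms, of lam] that by fastforce
  then show ?thesis
    using not_is_eigenvalue_L2[OF assms] unfolding mode_stable_def by blast
qed

end
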